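(* Consider a channel network whose links are divided into computational cells. For a cell $k$ of length $\Delta x_k>0$ with interior interfaces $x_{k-1/2}$ (left) and $x_{k+1/2}$ (right), let $\bar A_k^n\ge 0$ be the cell-averaged wetted area at time level $n$. At each interface $x_{j+1/2}$ let there be given reconstructed one-sided areas $A^{\pm}_{j+1/2}\ge 0$, velocities $u^{\pm}_{j+1/2}\in\mathbb R$, celerities $c^{\pm}_{j+1/2}\ge 0$, discharges $Q^{\pm}_{j+1/2}=A^{\pm}_{j+1/2}u^{\pm}_{j+1/2}$, and one-sided speeds $$a^+_{j+1/2}=\max\{0,\,u^+_{j+1/2}+c^+_{j+1/2},\,u^-_{j+1/2}+c^-_{j+1/2}\},\qquad a^-_{j+1/2}=\min\{0,\,u^+_{j+1/2}-c^+_{j+1/2},\,u^-_{j+1/2}-c^-_{j+1/2}\},$$ and assume $a^+_{j+1/2}-a^-_{j+1/2}>0$. Define the mass flux $$H^{(1)}_{j+1/2}=\frac{a^+_{j+1/2}Q^-_{j+1/2}-a^-_{j+1/2}Q^+_{j+1/2}}{a^+_{j+1/2}-a^-_{j+1/2}}+\frac{a^+_{j+1/2}a^-_{j+1/2}}{a^+_{j+1/2}-a^-_{j+1/2}}\big(A^+_{j+1/2}-A^-_{j+1/2}\big).$$ (i) (Interior cells.) Let $\bar A_k^{n+1}=\bar A_k^n-\frac{\Delta t}{\Delta x_k}\big(H^{(1)}_{k+1/2}-H^{(1)}_{k-1/2}\big)$. If $\Delta t>0$ satisfies $$\Delta t\le \Delta t_k:=\min\Big\{\frac{\Delta x_k}{a^+_{k-1/2}-a^-_{k+1/2}},\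 \frac{\Delta x_k\,\bar A_k^n}{a^+_{k+1/2}A^-_{k+1/2}-a^-_{k-1/2}A^+_{k-1/2}}\Big\}$$ (where a quotient with nonpositive denominator is interpreted as $+\infty$), then $\bar A_k^{n+1}\ge 0$. (ii) (Junction nodes.) Let a node $s$ have a set $J_{s,in}$ of inflowing links, each $i$ ending at the node with last interface $x_{i,n_i+1/2}$, and a set $J_{s,out}$ of outflowing links, each $j$ starting at the node with first interface $x_{j,1/2}$. Let the node control volume consist of pieces of lengths $\Delta x^{in}_{s,i}>0$, $\Delta x^{out}_{s,j}>0$ with average areas $\bar A^{in,n}_{s,i}\ge0$, $\bar A^{out,n}_{s,j}\ge0$, and define the total volumes $V^n_s=\sum_{i\in J_{s,in}}\Delta x^{in}_{s,i}\bar A^{in,n}_{s,i}+\sum_{j\in J_{s,out}}\Delta x^{out}_{s,j}\bar A^{out,n}_{s,j}$ and $$V_s^{n+1}=V_s^n+\Delta t\sum_{i\in J_{s,in}}H^{(1)}_{i,n_i+1/2}-\Delta t\sum_{j\in J_{s,out}}H^{(1)}_{j,1/2}.$$ If $$\Delta t\le\Delta t_s:=\min\Big\{\min_{i\in J_{s,in}}\Big[\frac{\Delta x^{in}_{s,i}}{a^+_{i,n_i+1/2}},\ \frac{-\Delta x^{in}_{s,i}\bar A^{in,n}_{s,i}}{a^-_{i,n_i+1/2}A^+_{i,n_i+1/2}}\Big],\ \min_{j\in J_{s,out}}\Big[\frac{-\Delta x^{out}_{s,j}}{a^-_{j,1/2}},\ \frac{\Delta x^{out}_{s,j}\bar A^{out,n}_{s,j}}{a^+_{j,1/2}A^-_{j,1/2}}\Big]\Big\}$$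 (with quotients having zero denominator interpreted as $+\infty$), then $V_s^{n+1}\ge 0$. Consequently, if $\Delta t\le\min\{\min_{k}\Delta t_k,\min_s\Delta t_s\}$, all updated cell areas and node volumes are nonnegative.
   Context: This is the mass-conservation part of a first-order-in-time (forward Euler) central-upwind finite-volume scheme for the one-dimensional Saint Venant equations $A_t+Q_x=0$, $Q_t+(Q^2/A+gI_1)_x=\dots$ on a channel network, where $A$ is the wetted cross-sectional area, $Q=Au$ the discharge, and $c=\sqrt{gA/\sigma_T}$ the celerity ($\sigma_T$ the free-surface width). The momentum update (with implicit treatment of friction) does not affect the area update. *)

theory Defs
  imports "HOL-Analysis.Analysis" "HOL-Library.Extended_Real"
begin

text \<open>Reconstructed data at one interface x_{j+1/2}:
  one-sided areas A^+ (Ap), A^- (Am), velocities u^+ (up), u^- (um),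
  celerities c^+ (cp), c^- (cm).  Discharges are Q^pm = A^pm u^pm.\<close>
record iface =
  Ap :: real
  Am :: real
  up :: real
  um :: real
  cp :: real
  cm :: real

definition Qp :: "iface \<Rightarrow> real" where "Qp I = Ap I * up I"
definition Qm :: "iface \<Rightarrow> real" where "Qm I = Am I * um I"

definition aplus :: "iface \<Rightarrow> real" where
  "aplus I = max 0 (max (up I + cp I) (um I + cm I))"

definition aminus :: "iface \<Rightarrow> real" where
  "aminus I = min 0 (min (up I - cp I) (um I - cm I))"

definition H1 :: "iface \<Rightarrow> real" where
  "H1 I = (aplus I * Qm I - aminus I * Qp I) / (aplus I - aminus I)
        + (aplus I * aminus I) / (aplus I - aminus I) * (Ap I - Am I)"

definition valid_iface :: "iface \<Rightarrow> bool" where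
  "valid_iface I \<longleftrightarrow> Ap I \<ge> 0 \<and> Am I \<ge> 0 \<and> cp I \<ge> 0 \<and> cm I \<ge> 0
                     \<and> aplus I - aminus I > 0"

definition quot_pos :: "real \<Rightarrow> real \<Rightarrow> ereal" where
  "quot_pos x d = (if d \<le> 0 then \<infinity> else ereal (x / d))"

definition quot_nz :: "real \<Rightarrow> real \<Rightarrow> ereal" where
  "quot_nz x d = (if d = 0 then \<infinity> else ereal (x / d))"

text \<open>Interior cell of length dx, average area A, left interface IL = x_{k-1/2},
  right interface IR = x_{k+1/2}.\<close>
definition dt_cell :: "real \<Rightarrow> real \<Rightarrow> iface \<Rightarrow> iface \<Rightarrow> ereal" where
  "dt_cell dx A IL IR =
     min (quot_pos dx (aplus IL - aminus IR))
         (quot_pos (dx * A) (aplus IR * Am IR - aminus IL * Ap IL))"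

definition cell_update :: "real \<Rightarrow> real \<Rightarrow> real \<Rightarrow> iface \<Rightarrow> iface \<Rightarrow> real" where
  "cell_update dt dx A IL IR = A - dt / dx * (H1 IR - H1 IL)"

text \<open>Junction node: Jin inflowing links (Iin i = last interface x_{i,n_i+1/2} of link i,
  piece length dxin i, average area Ain i), Jout outflowing links (Iout j = first
  interface x_{j,1/2}, piece length dxout j, average area Aout j).\<close>
definition dt_node :: "'l set \<Rightarrow> ('l \<Rightarrow> real) \<Rightarrow> ('l \<Rightarrow> real) \<Rightarrow> ('l \<Rightarrow> iface)
     \<Rightarrow> 'l set \<Rightarrow> ('l \<Rightarrow> real) \<Rightarrow> ('l \<Rightarrow> real) \<Rightarrow> ('l \<Rightarrow> iface) \<Rightarrow> ereal" where
  "dt_node Jin dxin Ain Iin Jout dxout Aout Iout =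
     min (INF i\<in>Jin. min (quot_nz (dxin i) (aplus (Iin i)))
                          (quot_nz (- dxin i * Ain i) (aminus (Iin i) * Ap (Iin i))))
         (INF j\<in>Jout. min (quot_nz (- dxout j) (aminus (Iout j)))
                          (quot_nz (dxout j * Aout j) (aplus (Iout j) * Am (Iout j))))"

definition node_volume :: "'l set \<Rightarrow> ('l \<Rightarrow> real) \<Rightarrow> ('l \<Rightarrow> real)
     \<Rightarrow> 'l set \<Rightarrow> ('l \<Rightarrow> real) \<Rightarrow> ('l \<Rightarrow> real) \<Rightarrow> real" where
  "node_volume Jin dxin Ain Jout dxout Aout =
     (\<Sum>i\<in>Jin. dxin i * Ain i) + (\<Sum>j\<in>Jout. dxout j * Aout j)"

definition node_update :: "real \<Rightarrow> 'l set \<Rightarrow> ('l \<Rightarrow> real) \<Rightarrow> ('l \<Rightarrow> real) \<Rightarrow> ('l \<Rightarrow> iface)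
     \<Rightarrow> 'l set \<Rightarrow> ('l \<Rightarrow> real) \<Rightarrow> ('l \<Rightarrow> real) \<Rightarrow> ('l \<Rightarrow> iface) \<Rightarrow> real" where
  "node_update dt Jin dxin Ain Iin Jout dxout Aout Iout =
     node_volume Jin dxin Ain Jout dxout Aout
     + dt * (\<Sum>i\<in>Jin. H1 (Iin i)) - dt * (\<Sum>j\<in>Jout. H1 (Iout j))"

end

theory Submission
  imports Defs
begin

text \<open>Writing the flux in upwind form
  \<open>H1 = (a\<^sup>+ A\<^sup>- (u\<^sup>- - a\<^sup>-) - a\<^sup>- A\<^sup>+ (u\<^sup>+ - a\<^sup>+)) / (a\<^sup>+ - a\<^sup>-)\<close>
  and using \<open>a\<^sup>- \<le> u\<^sup>\<plusminus> \<le> a\<^sup>+\<close> shows that it lies between the purely upwind fluxes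
  \<open>a\<^sup>- A\<^sup>+\<close> and \<open>a\<^sup>+ A\<^sup>-\<close>. Hence a cell (or node piece) can lose at most
  \<open>\<Delta>t (a\<^sup>+ A\<^sup>- - a\<^sup>- A\<^sup>+)\<close> of its mass per step, which the second quotient in each
  time-step bound keeps below the mass present.\<close>

lemma H1_upwind_form:
  assumes "aplus I - aminus I \<noteq> 0"
  shows "H1 I = (aplus I * Am I * (um I - aminus I) - aminus I * Ap I * (up I - aplus I))
                / (aplus I - aminus I)"
proof -
  have "H1 I = (aplus I * Qm I - aminus I * Qp I + aplus I * aminus I * (Ap I - Am I))
               / (aplus I - aminus I)"
    unfolding H1_def by (simp add: add_divide_distrib)
  then show ?thesis
    by (simp add: Qp_def Qm_def algebra_simps)
qed

lemma
  assumes "valid_iface I"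
  shows H1_le_aplus_Am: "H1 I \<le> aplus I * Am I"
    and aminus_Ap_le_H1: "aminus I * Ap I \<le> H1 I"
proof -
  let ?p = "aplus I" and ?m = "aminus I"
  let ?N = "?p * Am I * (um I - ?m) - ?m * Ap I * (up I - ?p)"
  have gap: "?p - ?m > 0" and A: "Ap I \<ge> 0" "Am I \<ge> 0"
    using assms by (auto simp: valid_iface_def)
  have p: "0 \<le> ?p" "um I \<le> ?p" "up I \<le> ?p" and m: "?m \<le> 0" "?m \<le> um I" "?m \<le> up I"
    using assms by (auto simp: valid_iface_def aplus_def aminus_def)
  have "?p * Am I * (um I - ?m) \<le> ?p * Am I * (?p - ?m)"
    using p A by (intro mult_left_mono) auto
  moreover have "0 \<le> ?m * Ap I * (up I - ?p)"
    using p m A by (simp add: mult_nonpos_nonpos mult_nonpos_nonneg)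
  ultimately have "?N \<le> ?p * Am I * (?p - ?m)" by linarith
  then show "H1 I \<le> ?p * Am I"
    using gap by (simp add: H1_upwind_form divide_le_eq)
  have "0 \<le> ?p * Am I * (um I - ?m)"
    using p m A by (intro mult_nonneg_nonneg) auto
  moreover have "(- ?m) * Ap I * (?m - ?p) \<le> (- ?m) * Ap I * (up I - ?p)"
    using p m A by (intro mult_left_mono) (auto simp: mult_nonpos_nonneg)
  ultimately have "?m * Ap I * (?p - ?m) \<le> ?N" by (simp add: algebra_simps)
  then show "?m * Ap I \<le> H1 I"
    using gap by (simp add: H1_upwind_form le_divide_eq)
qed

lemma mult_le_of_le_quot_pos:
  assumes "ereal t \<le> quot_pos x d" "0 \<le> t" "0 \<le> x"
  shows "t * d \<le> x"
proof (cases "d \<le> 0")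
  case True
  then show ?thesis
    using assms(2,3) by (meson mult_nonneg_nonpos order_trans)
next
  case False
  then show ?thesis
    using assms(1) by (simp add: quot_pos_def le_divide_eq)
qed

lemma quot_nz_eq_quot_pos: "0 \<le> d \<Longrightarrow> quot_nz x d = quot_pos x d"
  by (simp add: quot_nz_def quot_pos_def)

lemma quot_nz_uminus: "quot_nz (- x) d = quot_nz x (- d)"
  by (simp add: quot_nz_def)

lemma cell_update_nonneg:
  assumes "0 \<le> t" "0 < dx" "0 \<le> A" "valid_iface IL" "valid_iface IR"
    and "ereal t \<le> dt_cell dx A IL IR"
  shows "0 \<le> cell_update t dx A IL IR"
proof -
  let ?D = "aplus IR * Am IR - aminus IL * Ap IL"
  have "H1 IR - H1 IL \<le> ?D"
    using H1_le_aplus_Am[OF assms(5)] aminus_Ap_le_H1[OF assms(4)] by linarith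
  then have "t * (H1 IR - H1 IL) \<le> t * ?D"
    using assms(1) by (rule mult_left_mono)
  also have "t * ?D \<le> dx * A"
    using assms by (intro mult_le_of_le_quot_pos) (auto simp: dt_cell_def)
  finally have "t / dx * (H1 IR - H1 IL) \<le> A"
    using assms(2) by (simp add: divide_le_eq mult.commute mult.left_commute)
  then show ?thesis
    by (simp add: cell_update_def)
qed

lemma inflow_piece_nonneg:
  assumes "valid_iface I" "0 \<le> t" "0 \<le> V"
    and "ereal t \<le> quot_nz (- V) (aminus I * Ap I)"
  shows "0 \<le> V + t * H1 I"
proof -
  have "aminus I * Ap I \<le> 0"
    using assms(1) by (auto simp: valid_iface_def aminus_def intro: mult_nonpos_nonneg)
  then have "t * - (aminus I * Ap I) \<le> V"
    using assms by (intro mult_le_of_le_quot_pos) (auto simp: quot_nz_uminus quot_nz_eq_quot_pos)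
  moreover have "t * (aminus I * Ap I) \<le> t * H1 I"
    using aminus_Ap_le_H1[OF assms(1)] assms(2) by (rule mult_left_mono)
  ultimately show ?thesis by linarith
qed

lemma outflow_piece_nonneg:
  assumes "valid_iface I" "0 \<le> t" "0 \<le> V"
    and "ereal t \<le> quot_nz V (aplus I * Am I)"
  shows "0 \<le> V - t * H1 I"
proof -
  have "0 \<le> aplus I * Am I"
    using assms(1) by (auto simp: valid_iface_def aplus_def)
  then have "t * (aplus I * Am I) \<le> V"
    using assms by (intro mult_le_of_le_quot_pos) (auto simp: quot_nz_eq_quot_pos)
  moreover have "t * H1 I \<le> t * (aplus I * Am I)"
    using H1_le_aplus_Am[OF assms(1)] assms(2) by (rule mult_left_mono)
  ultimately show ?thesis by linarith
qed

lemma node_update_eq_sum_pieces: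
  "node_update t Jin dxin Ain Iin Jout dxout Aout Iout =
     (\<Sum>i\<in>Jin. dxin i * Ain i + t * H1 (Iin i)) + (\<Sum>j\<in>Jout. dxout j * Aout j - t * H1 (Iout j))"
  by (simp add: node_update_def node_volume_def sum.distrib sum_subtractf sum_distrib_left)

lemma node_update_nonneg:
  assumes t: "0 \<le> t"
    and inl: "\<And>i. i \<in> Jin \<Longrightarrow> 0 \<le> dxin i \<and> 0 \<le> Ain i \<and> valid_iface (Iin i)"
    and outl: "\<And>j. j \<in> Jout \<Longrightarrow> 0 \<le> dxout j \<and> 0 \<le> Aout j \<and> valid_iface (Iout j)"
    and le: "ereal t \<le> dt_node Jin dxin Ain Iin Jout dxout Aout Iout"
  shows "0 \<le> node_update t Jin dxin Ain Iin Jout dxout Aout Iout"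
proof -
  have inflow: "0 \<le> dxin i * Ain i + t * H1 (Iin i)" if i: "i \<in> Jin" for i
  proof (rule inflow_piece_nonneg)
    have "ereal t \<le> min (quot_nz (dxin i) (aplus (Iin i)))
                         (quot_nz (- dxin i * Ain i) (aminus (Iin i) * Ap (Iin i)))"
      using le INF_lower[OF i] unfolding dt_node_def by (meson min.boundedE order_trans)
    then show "ereal t \<le> quot_nz (- (dxin i * Ain i)) (aminus (Iin i) * Ap (Iin i))"
      by simp
  qed (use t inl[OF i] in auto)
  have outflow: "0 \<le> dxout j * Aout j - t * H1 (Iout j)" if j: "j \<in> Jout" for j
  proof (rule outflow_piece_nonneg)
    have "ereal t \<le> min (quot_nz (- dxout j) (aminus (Iout j)))
                         (quot_nz (dxout j * Aout j) (aplus (Iout j) * Am (Iout j)))"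
      using le INF_lower[OF j] unfolding dt_node_def by (meson min.boundedE order_trans)
    then show "ereal t \<le> quot_nz (dxout j * Aout j) (aplus (Iout j) * Am (Iout j))"
      by simp
  qed (use t outl[OF j] in auto)
  have "0 \<le> (\<Sum>i\<in>Jin. dxin i * Ain i + t * H1 (Iin i))"
    by (rule sum_nonneg) (rule inflow)
  moreover have "0 \<le> (\<Sum>j\<in>Jout. dxout j * Aout j - t * H1 (Iout j))"
    by (rule sum_nonneg) (rule outflow)
  ultimately show ?thesis
    unfolding node_update_eq_sum_pieces by simp
qed

theorem theorem1:
  fixes K :: "'k set" and dx A :: "'k \<Rightarrow> real" and IL IR :: "'k \<Rightarrow> iface"
    and S :: "'n set" and Jin Jout :: "'n \<Rightarrow> 'l set"
    and dxin Ain dxout Aout :: "'n \<Rightarrow> 'l \<Rightarrow> real" and Iin Iout :: "'n \<Rightarrow> 'l \<Rightarrow> iface"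
    and dt :: real
  assumes dt_pos: "dt > 0"
    and finK: "finite K" and finS: "finite S"
    and cells: "\<And>k. k \<in> K \<Longrightarrow> dx k > 0 \<and> A k \<ge> 0 \<and> valid_iface (IL k) \<and> valid_iface (IR k)"
    and fin_links: "\<And>s. s \<in> S \<Longrightarrow> finite (Jin s) \<and> finite (Jout s)"
    and inlinks: "\<And>s i. s \<in> S \<Longrightarrow> i \<in> Jin s \<Longrightarrow>
                    dxin s i > 0 \<and> Ain s i \<ge> 0 \<and> valid_iface (Iin s i)"
    and outlinks: "\<And>s j. s \<in> S \<Longrightarrow> j \<in> Jout s \<Longrightarrow>
                    dxout s j > 0 \<and> Aout s j \<ge> 0 \<and> valid_iface (Iout s j)"
  shows "(\<forall>k\<in>K. ereal dt \<le> dt_cell (dx k) (A k) (IL k) (IR k)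
                \<longrightarrow> cell_update dt (dx k) (A k) (IL k) (IR k) \<ge> 0)
       \<and> (\<forall>s\<in>S. ereal dt \<le> dt_node (Jin s) (dxin s) (Ain s) (Iin s) (Jout s) (dxout s) (Aout s) (Iout s)
                \<longrightarrow> node_update dt (Jin s) (dxin s) (Ain s) (Iin s) (Jout s) (dxout s) (Aout s) (Iout s) \<ge> 0)
       \<and> (ereal dt \<le> min (INF k\<in>K. dt_cell (dx k) (A k) (IL k) (IR k))
                         (INF s\<in>S. dt_node (Jin s) (dxin s) (Ain s) (Iin s) (Jout s) (dxout s) (Aout s) (Iout s))
          \<longrightarrow> (\<forall>k\<in>K. cell_update dt (dx k) (A k) (IL k) (IR k) \<ge> 0)
            \<and> (\<forall>s\<in>S. node_update dt (Jin s) (dxin s) (Ain s) (Iin s) (Jout s) (dxout s) (Aout s) (Iout s) \<ge> 0))"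
proof -
  have cell: "\<forall>k\<in>K. ereal dt \<le> dt_cell (dx k) (A k) (IL k) (IR k)
                \<longrightarrow> cell_update dt (dx k) (A k) (IL k) (IR k) \<ge> 0"
    using cells dt_pos by (auto intro: cell_update_nonneg)
  have node: "\<forall>s\<in>S. ereal dt \<le> dt_node (Jin s) (dxin s) (Ain s) (Iin s) (Jout s) (dxout s) (Aout s) (Iout s)
                \<longrightarrow> node_update dt (Jin s) (dxin s) (Ain s) (Iin s) (Jout s) (dxout s) (Aout s) (Iout s) \<ge> 0"
  proof (intro ballI impI)
    fix s assume "s \<in> S"
      and "ereal dt \<le> dt_node (Jin s) (dxin s) (Ain s) (Iin s) (Jout s) (dxout s) (Aout s) (Iout s)"
    then show "node_update dt (Jin s) (dxin s) (Ain s) (Iin s) (Jout s) (dxout s) (Aout s) (Iout s) \<ge> 0"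
      using dt_pos inlinks outlinks by (intro node_update_nonneg) (auto simp: less_imp_le)
  qed
  show ?thesis
    using cell node INF_lower[of _ K "\<lambda>k. dt_cell (dx k) (A k) (IL k) (IR k)"]
      INF_lower[of _ S "\<lambda>s. dt_node (Jin s) (dxin s) (Ain s) (Iin s) (Jout s) (dxout s) (Aout s) (Iout s)"]
    by (meson min.boundedE order_trans)
qed

end
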